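(* Let $\mathbf M$ be the Wright–Fisher matrix and $\phi(x)=x\log x$ (with $\phi(0)=0$). For every $\mathbf p\in\Delta^N$ with $\langle\mathbf u^{(1)},\mathbf p\rangle>0$, one has $E(\mathbf M\mathbf p)\le E(\mathbf p)$; consequently $n\mapsto E(\mathbf M^n\mathbf p)$ is non-increasing.
   Context: Fix $N\ge2$ and $(\mathsf s_0,\dots,\mathsf s_N)$ with $\mathsf s_0=0$, $\mathsf s_N=1$ and $0<\mathsf s_j<1$ for $1\le j\le N-1$. The Wright–Fisher matrix is $\mathbf M=(M_{ij})_{i,j=0}^N$ with $M_{ij}=\binom Ni\mathsf s_j^{\,i}(1-\mathsf s_j)^{N-i}$ (column-stochastic; probability vectors evolve by $\mathbf p\mapsto\mathbf M\mathbf p$). Its core $(M_{ij})_{i,j=1}^{N-1}$ is a positive matrix; let $\mu_1>0$ be its Perron eigenvalue and $\mathbf u^{(1)}=(u^{(1)}_i)_{i=1}^{N-1}$, $\mathbf v^{(1)}=(v^{(1)}_i)_{i=1}^{N-1}$ its positive left and right Perron eigenvectors, normalized by $\sum_iv^{(1)}_i=1$, $\sum_iu^{(1)}_iv^{(1)}_i=1$. Let $\Delta^N=\{\mathbf x\in\mathbb R^{N+1}:x_i\ge0,\sum_ix_i=1\}$, $\langle\mathbf u^{(1)},\mathbf p\rangle=\sum_{i=1}^{N-1}u^{(1)}_ip_i$, and for $\langle\mathbf u^{(1)},\mathbf p\rangle>0$, $E(\mathbf p)=\sum_{i=1}^{N-1}\phi\!\left(\frac{p_i}{v^{(1)}_i\langle\mathbf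 u^{(1)},\mathbf p\rangle}\right)v^{(1)}_iu^{(1)}_i$. *)

theory Defs
  imports Complex_Main
begin

text \<open>Vectors indexed by 0..N are represented as functions nat => real; only
  indices 0..N are relevant.\<close>

definition WF_entry :: "nat \<Rightarrow> (nat \<Rightarrow> real) \<Rightarrow> nat \<Rightarrow> nat \<Rightarrow> real" where
  "WF_entry N s i j = real (N choose i) * s j ^ i * (1 - s j) ^ (N - i)"

definition WF_apply :: "nat \<Rightarrow> (nat \<Rightarrow> real) \<Rightarrow> (nat \<Rightarrow> real) \<Rightarrow> (nat \<Rightarrow> real)" where
  "WF_apply N s p = (\<lambda>i. \<Sum>j = 0..N. WF_entry N s i j * p j)"

definition phi :: "real \<Rightarrow> real" where
  "phi x = (if x = 0 then 0 else x * ln x)"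

definition simplex :: "nat \<Rightarrow> (nat \<Rightarrow> real) set" where
  "simplex N = {p. (\<forall>i\<le>N. 0 \<le> p i) \<and> (\<Sum>i = 0..N. p i) = 1}"

definition upair :: "nat \<Rightarrow> (nat \<Rightarrow> real) \<Rightarrow> (nat \<Rightarrow> real) \<Rightarrow> real" where
  "upair N u p = (\<Sum>i = 1..N-1. u i * p i)"

definition Efun :: "nat \<Rightarrow> (nat \<Rightarrow> real) \<Rightarrow> (nat \<Rightarrow> real) \<Rightarrow> (nat \<Rightarrow> real) \<Rightarrow> real" where
  "Efun N u v p = (\<Sum>i = 1..N-1. phi (p i / (v i * upair N u p)) * v i * u i)"

end

theory Submission
  imports Defs "HOL-Analysis.Convex"
begin

text \<open>
  Write \<open>A\<close> for the core of the Wright--Fisher matrix, \<open>I = {1..N-1}\<close>, and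
  \<open>c = \<langle>u, p\<rangle>\<close>. Since \<open>u\<close> is a left Perron eigenvector, \<open>\<langle>u, A p\<rangle> = \<mu> c\<close>, and
  \<open>(A p)\<^sub>i / (v\<^sub>i \<mu> c) = \<Sum>\<^sub>j w\<^sub>i\<^sub>j q\<^sub>j\<close> with \<open>q\<^sub>j = p\<^sub>j / (v\<^sub>j c)\<close> and weights
  \<open>w\<^sub>i\<^sub>j = A\<^sub>i\<^sub>j v\<^sub>j / (\<mu> v\<^sub>i)\<close>, which form a stochastic matrix because \<open>v\<close> is a right
  Perron eigenvector. Jensen's inequality for the convex function \<open>\<phi>\<close> bounds each
  term of \<open>E(A p)\<close>, and summing against \<open>u\<^sub>i v\<^sub>i\<close> and using \<open>u\<close> once more gives back
  \<open>E(p)\<close>. The boundary columns of \<open>M\<close> vanish on the rows in \<open>I\<close> (as \<open>s\<^sub>0 = 0\<close>,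
  \<open>s\<^sub>N = 1\<close>), so \<open>E(M p)\<close> only sees \<open>A\<close>; positivity of \<open>\<langle>u, M\<^sup>n p\<rangle> = \<mu>\<^sup>n c\<close> lets
  the one-step inequality be iterated.
\<close>

lemma convex_on_x_ln_x: "convex_on {0<..} (\<lambda>x::real. x * ln x)"
proof (rule convex_on_realI[where f' = "\<lambda>x. ln x + 1"])
  fix x :: real assume "x \<in> {0<..}"
  then show "((\<lambda>x. x * ln x) has_real_derivative ln x + 1) (at x)"
    by (auto intro!: derivative_eq_intros)
qed auto

lemma convex_on_phi: "convex_on {0..} phi"
proof (rule convex_on_linorderI)
  fix t x y :: real assume t: "0 < t" "t < 1" and xy: "x \<in> {0..}" "y \<in> {0..}" "x < y"
  show "phi ((1 - t) *\<^sub>R x + t *\<^sub>R y) \<le> (1 - t) * phi x + t * phi y"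
  proof (cases "x = 0")
    case True
    with xy have y: "y > 0" by auto
    have "t * y * ln t \<le> 0"
      using t y by (simp add: mult_nonneg_nonpos)
    with True t y show ?thesis by (simp add: phi_def ln_mult algebra_simps)
  next
    case False
    with xy have x: "x > 0" and y: "y > 0" by auto
    with t have "(1 - t) * x + t * y > 0" by (simp add: add_pos_pos)
    with convex_onD[OF convex_on_x_ln_x, of t x y] t x y show ?thesis
      by (simp add: phi_def)
  qed
qed auto

definition mat_vec :: "'a set \<Rightarrow> ('a \<Rightarrow> 'a \<Rightarrow> real) \<Rightarrow> ('a \<Rightarrow> real) \<Rightarrow> 'a \<Rightarrow> real" where
  "mat_vec I A p = (\<lambda>i. \<Sum>j\<in>I. A i j * p j)"

definition rel_entropy :: "'a set \<Rightarrow> ('a \<Rightarrow> real) \<Rightarrow> ('a \<Rightarrow> real) \<Rightarrow> ('a \<Rightarrow> real) \<Rightarrow> real" where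
  "rel_entropy I u v p = (\<Sum>i\<in>I. phi (p i / (v i * (\<Sum>k\<in>I. u k * p k))) * v i * u i)"

lemma rel_entropy_cong:
  "(\<And>i. i \<in> I \<Longrightarrow> p i = q i) \<Longrightarrow> rel_entropy I u v p = rel_entropy I u v q"
  unfolding rel_entropy_def by (simp cong: sum.cong)

lemma pairing_mat_vec_left_eigen:
  assumes "finite I" and left: "\<And>j. j \<in> I \<Longrightarrow> (\<Sum>i\<in>I. u i * A i j) = mu * u j"
  shows "(\<Sum>i\<in>I. u i * mat_vec I A p i) = mu * (\<Sum>j\<in>I. u j * p j)"
proof -
  have "(\<Sum>i\<in>I. u i * mat_vec I A p i) = (\<Sum>j\<in>I. (\<Sum>i\<in>I. u i * A i j) * p j)"
    by (simp add: mat_vec_def sum_distrib_left sum_distrib_right mult.assoc) (rule sum.swap)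
  also have "\<dots> = mu * (\<Sum>j\<in>I. u j * p j)"
    by (simp add: left sum_distrib_left mult.assoc cong: sum.cong)
  finally show ?thesis .
qed

lemma rel_entropy_mat_vec_le:
  assumes I: "finite I" "I \<noteq> {}" and mu: "mu > 0"
    and A_nonneg: "\<And>i j. i \<in> I \<Longrightarrow> j \<in> I \<Longrightarrow> A i j \<ge> 0"
    and u_pos: "\<And>i. i \<in> I \<Longrightarrow> u i > 0" and v_pos: "\<And>i. i \<in> I \<Longrightarrow> v i > 0"
    and left: "\<And>j. j \<in> I \<Longrightarrow> (\<Sum>i\<in>I. u i * A i j) = mu * u j"
    and right: "\<And>i. i \<in> I \<Longrightarrow> (\<Sum>j\<in>I. A i j * v j) = mu * v i"
    and p_nonneg: "\<And>j. j \<in> I \<Longrightarrow> p j \<ge> 0" and c_pos: "(\<Sum>j\<in>I. u j * p j) > 0"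
  shows "rel_entropy I u v (mat_vec I A p) \<le> rel_entropy I u v p"
proof -
  define c where "c = (\<Sum>j\<in>I. u j * p j)"
  define q where "q j = p j / (v j * c)" for j
  define w where "w i j = A i j * v j / (mu * v i)" for i j
  have pairing: "(\<Sum>k\<in>I. u k * mat_vec I A p k) = mu * c"
    unfolding c_def using pairing_mat_vec_left_eigen[OF I(1) left] .
  have c: "c > 0" using c_pos by (simp add: c_def)
  have jensen: "phi (mat_vec I A p i / (v i * (mu * c))) \<le> (\<Sum>j\<in>I. w i j * phi (q j))"
    if i: "i \<in> I" for i
  proof -
    have "mat_vec I A p i / (v i * (mu * c)) = (\<Sum>j\<in>I. w i j *\<^sub>R q j)"
      unfolding mat_vec_def sum_divide_distrib
    proof (rule sum.cong)
      fix j assume "j \<in> I"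
      then show "A i j * p j / (v i * (mu * c)) = w i j *\<^sub>R q j"
        using v_pos[OF i] v_pos[of j] mu c by (simp add: w_def q_def field_simps)
    qed simp
    moreover have "(\<Sum>j\<in>I. w i j) = 1"
      using right[OF i] v_pos[OF i] mu by (simp add: w_def flip: sum_divide_distrib)
    moreover have "w i j \<ge> 0" "q j \<in> {0..}" if "j \<in> I" for j
      using A_nonneg[OF i that] v_pos[OF i] v_pos[OF that] mu p_nonneg[OF that] c
      by (simp_all add: w_def q_def)
    ultimately show ?thesis
      using convex_on_sum[OF I convex_on_phi, of "w i" q] by simp
  qed
  have "rel_entropy I u v (mat_vec I A p)
      = (\<Sum>i\<in>I. phi (mat_vec I A p i / (v i * (mu * c))) * v i * u i)"
    by (simp add: rel_entropy_def pairing)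
  also have "\<dots> \<le> (\<Sum>i\<in>I. (\<Sum>j\<in>I. w i j * phi (q j)) * v i * u i)"
    using jensen u_pos v_pos by (intro sum_mono mult_right_mono) (auto intro: less_imp_le)
  also have "\<dots> = (\<Sum>i\<in>I. \<Sum>j\<in>I. (u i * A i j) * (v j * phi (q j) / mu))"
  proof (rule sum.cong)
    fix i assume "i \<in> I"
    then show "(\<Sum>j\<in>I. w i j * phi (q j)) * v i * u i
        = (\<Sum>j\<in>I. (u i * A i j) * (v j * phi (q j) / mu))"
      unfolding sum_distrib_right using v_pos[of i] mu
      by (intro sum.cong) (simp_all add: w_def field_simps)
  qed simp
  also have "\<dots> = (\<Sum>j\<in>I. (\<Sum>i\<in>I. u i * A i j) * (v j * phi (q j) / mu))"
    unfolding sum_distrib_right by (rule sum.swap)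
  also have "\<dots> = rel_entropy I u v p"
    using mu by (simp add: rel_entropy_def left q_def c_def mult_ac cong: sum.cong)
  finally show ?thesis .
qed

lemma WF_entry_nonneg: "0 \<le> s j \<Longrightarrow> s j \<le> 1 \<Longrightarrow> 0 \<le> WF_entry N s i j"
  by (simp add: WF_entry_def)

lemma WF_apply_nonneg:
  "(\<And>j. j \<le> N \<Longrightarrow> 0 \<le> s j \<and> s j \<le> 1) \<Longrightarrow> (\<And>j. j \<le> N \<Longrightarrow> 0 \<le> p j)
    \<Longrightarrow> 0 \<le> WF_apply N s p i"
  unfolding WF_apply_def by (auto intro!: sum_nonneg mult_nonneg_nonneg WF_entry_nonneg)

lemma WF_apply_core:
  assumes "0 < N" "s 0 = 0" "s N = 1" and i: "i \<in> {1..N-1}"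
  shows "WF_apply N s p i = mat_vec {1..N-1} (WF_entry N s) p i"
proof -
  have "{0..N} = insert 0 (insert N {1..N-1})" using \<open>0 < N\<close> by auto
  moreover have "WF_entry N s i 0 = 0" "WF_entry N s i N = 0"
    using assms by (auto simp: WF_entry_def)
  ultimately show ?thesis using \<open>0 < N\<close> by (simp add: WF_apply_def mat_vec_def)
qed

lemma Efun_eq_rel_entropy: "Efun N u v p = rel_entropy {1..N-1} u v p"
  by (simp add: Efun_def upair_def rel_entropy_def)

lemma upair_WF_apply:
  assumes "0 < N" "s 0 = 0" "s N = 1"
    and left: "\<And>j. j \<in> {1..N-1} \<Longrightarrow> (\<Sum>i = 1..N-1. u i * WF_entry N s i j) = mu * u j"
  shows "upair N u (WF_apply N s p) = mu * upair N u p"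
proof -
  have "upair N u (WF_apply N s p) = (\<Sum>i = 1..N-1. u i * mat_vec {1..N-1} (WF_entry N s) p i)"
    unfolding upair_def using WF_apply_core[OF assms(1-3)] by (intro sum.cong) simp_all
  also have "\<dots> = mu * upair N u p"
    unfolding upair_def by (rule pairing_mat_vec_left_eigen[OF _ left]) simp
  finally show ?thesis .
qed

lemma Efun_WF_apply_le:
  assumes N: "2 \<le> N" and "s 0 = 0" "s N = 1"
    and "\<And>j. j \<le> N \<Longrightarrow> 0 \<le> s j \<and> s j \<le> 1"
    and "mu > 0"
    and "\<And>i. i \<in> {1..N-1} \<Longrightarrow> u i > 0" "\<And>i. i \<in> {1..N-1} \<Longrightarrow> v i > 0"
    and "\<And>j. j \<in> {1..N-1} \<Longrightarrow> (\<Sum>i = 1..N-1. u i * WF_entry N s i j) = mu * u j"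
    and "\<And>i. i \<in> {1..N-1} \<Longrightarrow> (\<Sum>j = 1..N-1. WF_entry N s i j * v j) = mu * v i"
    and "\<And>j. j \<le> N \<Longrightarrow> 0 \<le> p j" and "upair N u p > 0"
  shows "Efun N u v (WF_apply N s p) \<le> Efun N u v p"
proof -
  have "Efun N u v (WF_apply N s p) = rel_entropy {1..N-1} u v (mat_vec {1..N-1} (WF_entry N s) p)"
    unfolding Efun_eq_rel_entropy using N WF_apply_core[of N s] assms(2,3)
    by (intro rel_entropy_cong) auto
  also have "\<dots> \<le> Efun N u v p"
    unfolding Efun_eq_rel_entropy using assms
    by (intro rel_entropy_mat_vec_le) (auto simp: upair_def intro: WF_entry_nonneg)
  finally show ?thesis .
qed

text \<open>\<open>E\<close> is invariant under rescaling \<open>u\<close> and \<open>v\<close>.\<close>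

theorem mainTheorem10:
  fixes N :: nat and s u v p :: "nat \<Rightarrow> real" and mu :: real
  assumes N2: "N \<ge> 2"
    and s0: "s 0 = 0" and sN: "s N = 1"
    and sint: "\<forall>j. 1 \<le> j \<and> j \<le> N - 1 \<longrightarrow> 0 < s j \<and> s j < 1"
    and mu_pos: "mu > 0"
    and u_pos: "\<forall>i. 1 \<le> i \<and> i \<le> N - 1 \<longrightarrow> u i > 0"
    and v_pos: "\<forall>i. 1 \<le> i \<and> i \<le> N - 1 \<longrightarrow> v i > 0"
    and u_left: "\<forall>j. 1 \<le> j \<and> j \<le> N - 1 \<longrightarrow>
                   (\<Sum>i = 1..N-1. u i * WF_entry N s i j) = mu * u j"
    and v_right: "\<forall>i. 1 \<le> i \<and> i \<le> N - 1 \<longrightarrow>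
                   (\<Sum>j = 1..N-1. WF_entry N s i j * v j) = mu * v i"
    and v_norm: "(\<Sum>i = 1..N-1. v i) = 1"
    and uv_norm: "(\<Sum>i = 1..N-1. u i * v i) = 1"
    and p_simplex: "p \<in> simplex N"
    and p_pos: "upair N u p > 0"
  shows "Efun N u v (WF_apply N s p) \<le> Efun N u v p
         \<and> decseq (\<lambda>n. Efun N u v ((WF_apply N s ^^ n) p))"
proof -
  define S where "S = {q. (\<forall>j\<le>N. 0 \<le> q j) \<and> upair N u q > 0}"
  have N: "0 < N" using N2 by simp
  have s01: "0 \<le> s j \<and> s j \<le> 1" if "j \<le> N" for j
  proof (cases "j = 0 \<or> j = N")
    case False
    with that have "1 \<le> j \<and> j \<le> N - 1" by auto
    with sint show ?thesis by fastforce
  qed (use s0 sN in auto)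
  have step_S: "WF_apply N s q \<in> S" if "q \<in> S" for q
    using that s01 mu_pos upair_WF_apply[OF N s0 sN, of u mu q] u_left
    by (auto simp: S_def intro: WF_apply_nonneg)
  have step_E: "Efun N u v (WF_apply N s q) \<le> Efun N u v q" if "q \<in> S" for q
    using that u_pos v_pos u_left v_right
    by (intro Efun_WF_apply_le[OF N2 s0 sN s01 mu_pos]) (auto simp: S_def)
  have p_S: "p \<in> S" using p_simplex p_pos by (simp add: S_def simplex_def)
  have "(WF_apply N s ^^ n) p \<in> S" for n by (induction n) (auto simp: p_S step_S)
  then show ?thesis
    using step_E[OF p_S] step_E by (auto intro: decseq_SucI)
qed

end
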